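(* Let $G$ be a set, $L$ a normal modal logic with the finite model property, $T$ a set of formulas, and $\kappa$ a regular cardinal with $\kappa>2^{|\mathrm{Fm}_\omega(G)|}$. Then for each $\varphi\in\mathrm{Fm}_\kappa(G)$ there is a family $\mathscr S\subseteq\mathcal P(\mathrm{Fm}_\omega(G))$ such that $(G,\kappa,L,T)\vdash\ \Rightarrow \varphi\leftrightarrow\bigwedge\{\bigvee S\mid S\in\mathscr S\}$.
   Context: $\mathrm{Fm}_\kappa(G)$ is the least set containing $G$ closed under $\neg$, $\Box$, and $\bigwedge S,\bigvee S$ for sets $S$ of size $<\kappa$; $\mathrm{Fm}_\omega(G)$ is the set of ordinary finitary formulas (conjunctions/disjunctions of finite sets). $\varphi\leftrightarrow\psi$ abbreviates $(\neg\varphi\vee\psi)\wedge(\neg\psi\vee\varphi)$. The calculus $(G,\kappa,L,T)$ with $T\subseteq \mathrm{Fm}_\kappa(G)$ has rules: (Ax) $\varphi\Rightarrow\varphi$; (W) from $\Gamma\Rightarrow\Delta$ infer $\Gamma,\Gamma'\Rightarrow\Delta,\Delta'$; (Cut) from $\Gamma\Rightarrow\Delta,\varphi$ for every $\varphi\in S$ and $S,\Gamma'\Rightarrow\Delta'$ infer $\Gamma,\Gamma'\Rightarrow\Delta,\Delta'$; (L$\neg$) from $\Gamma\Rightarrow\Delta,S$ infer $\neg S,\Gamma\Rightarrow\Delta$; (R$\neg$) from $S,\Gamma\Rightarrow\Delta$ infer $\Gamma\Rightarrow\Delta,\neg S$; for a family $\mathscr S$ of sets each of size $<\kappa$: (L$\bigwedge$)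 from $\bigcup\mathscr S,\Gamma\Rightarrow\Delta$ infer $\{\bigwedge S:S\in\mathscr S\},\Gamma\Rightarrow\Delta$; (R$\bigwedge$) from $\Gamma\Rightarrow\Delta,\{c(S):S\in\mathscr S\}$ for every choice function $c$ infer $\Gamma\Rightarrow\Delta,\{\bigwedge S:S\in\mathscr S\}$; (L$\bigvee$) from $\{c(S)\},\Gamma\Rightarrow\Delta$ for every choice function $c$ infer $\{\bigvee S:S\in\mathscr S\},\Gamma\Rightarrow\Delta$; (R$\bigvee$) from $\Gamma\Rightarrow\Delta,\bigcup\mathscr S$ infer $\Gamma\Rightarrow\Delta,\{\bigvee S\}$; (Nec) from $S\Rightarrow\varphi$ infer $\Box S\Rightarrow\Box\varphi$; (lf) for sets $S_n$ of size $<\kappa$: from $\{\Box^n\bigvee(I\cap S_n):n\in\omega\},\Gamma\Rightarrow\Delta$ for every finite $I\subseteq\bigcup_nS_n$ infer $\{\Box^n\bigvee S_n:n\in\omega\},\Gamma\Rightarrow\Delta$; (T,L) from $S,\Gamma\Rightarrow\Delta$ infer $\Gamma\Rightarrow\Delta$ for $S\subseteq T\cup L_{(G,\kappa)}$ (substitution instances of theorems of $L$). Proofs are well-founded trees. *)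

theory Defs imports Main "HOL-Library.FSet" begin

unbundle cardinal_syntax

text \<open>Formulas of Fm_kappa(G) are well-founded trees in which conjunctions and
  disjunctions are taken of SETS of formulas. Since a datatype cannot be nested
  through the (unbounded) powerset, we first introduce raw trees whose conjunction
  and disjunction nodes are indexed by a type k (partial functions k => raw tree),
  and then identify raw trees extensionally: two conjunctions are identified iff
  their sets of immediate subformulas coincide (hereditarily). The quotient type
  fm therefore has exactly the formulas-with-set-branching as elements, for all
  sets of cardinality at most |UNIV :: k set|; the cardinal kappa of the paper is
  |UNIV :: k set| and Fm_kappa G only uses sets of size < kappa.\<close>

datatype ('g,'k) pfm = PVar 'g | PNeg "('g,'k) pfm" | PBox "('g,'k) pfm"
  | PConj "'k \<Rightarrow> ('g,'k) pfm option" | PDisj "'k \<Rightarrow> ('g,'k) pfm option"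

inductive peq :: "('g,'k) pfm \<Rightarrow> ('g,'k) pfm \<Rightarrow> bool" where
  "peq (PVar g) (PVar g)"
| "peq a b \<Longrightarrow> peq (PNeg a) (PNeg b)"
| "peq a b \<Longrightarrow> peq (PBox a) (PBox b)"
| "(\<forall>i a. f i = Some a \<longrightarrow> (\<exists>j b. h j = Some b \<and> peq a b)) \<Longrightarrow>
   (\<forall>j b. h j = Some b \<longrightarrow> (\<exists>i a. f i = Some a \<and> peq a b)) \<Longrightarrow>
   peq (PConj f) (PConj h)"
| "(\<forall>i a. f i = Some a \<longrightarrow> (\<exists>j b. h j = Some b \<and> peq a b)) \<Longrightarrow>
   (\<forall>j b. h j = Some b \<longrightarrow> (\<exists>i a. f i = Some a \<and> peq a b)) \<Longrightarrow>
   peq (PDisj f) (PDisj h)"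

lemma peq_refl: "peq x x"
proof (induction x)
  case (PConj f)
  show ?case
  proof (rule peq.intros(4))
    show "\<forall>i a. f i = Some a \<longrightarrow> (\<exists>j b. f j = Some b \<and> peq a b)"
      using PConj by (metis option.set_intros rangeI)
    show "\<forall>j b. f j = Some b \<longrightarrow> (\<exists>i a. f i = Some a \<and> peq a b)"
      using PConj by (metis option.set_intros rangeI)
  qed
next
  case (PDisj f)
  show ?case
  proof (rule peq.intros(5))
    show "\<forall>i a. f i = Some a \<longrightarrow> (\<exists>j b. f j = Some b \<and> peq a b)"
      using PDisj by (metis option.set_intros rangeI)
    show "\<forall>j b. f j = Some b \<longrightarrow> (\<exists>i a. f i = Some a \<and> peq a b)"
      using PDisj by (metis option.set_intros rangeI)
  qed
qed (auto intro: peq.intros)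

lemma peq_sym: "peq x y \<Longrightarrow> peq y x"
proof (induction rule: peq.induct)
  case (4 f h)
  show ?case
  proof (rule peq.intros(4))
    show "\<forall>i a. h i = Some a \<longrightarrow> (\<exists>j b. f j = Some b \<and> peq a b)" using 4(2) by blast
    show "\<forall>j b. f j = Some b \<longrightarrow> (\<exists>i a. h i = Some a \<and> peq a b)" using 4(1) by blast
  qed
next
  case (5 f h)
  show ?case
  proof (rule peq.intros(5))
    show "\<forall>i a. h i = Some a \<longrightarrow> (\<exists>j b. f j = Some b \<and> peq a b)" using 5(2) by blast
    show "\<forall>j b. f j = Some b \<longrightarrow> (\<exists>i a. h i = Some a \<and> peq a b)" using 5(1) by blast
  qed
qed (auto intro: peq.intros)

lemma peq_trans: "peq x y \<Longrightarrow> peq y z \<Longrightarrow> peq x z"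
proof (induction x y arbitrary: z rule: peq.induct)
  case (1 g)
  then show ?case by simp
next
  case (2 a b)
  from 2(3) obtain c where "z = PNeg c" "peq b c" by (cases rule: peq.cases) auto
  then show ?case using 2(2) by (auto intro: peq.intros)
next
  case (3 a b)
  from 3(3) obtain c where "z = PBox c" "peq b c" by (cases rule: peq.cases) auto
  then show ?case using 3(2) by (auto intro: peq.intros)
next
  case (4 f h)
  from 4(3) obtain k where z: "z = PConj k"
    and hk1: "\<forall>i a. h i = Some a \<longrightarrow> (\<exists>j b. k j = Some b \<and> peq a b)"
    and hk2: "\<forall>j b. k j = Some b \<longrightarrow> (\<exists>i a. h i = Some a \<and> peq a b)"
    by (cases rule: peq.cases) auto
  show ?case unfolding z
  proof (rule peq.intros(4))
    show "\<forall>i a. f i = Some a \<longrightarrow> (\<exists>j b. k j = Some b \<and> peq a b)"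
      using 4(1) hk1 by metis
    show "\<forall>j b. k j = Some b \<longrightarrow> (\<exists>i a. f i = Some a \<and> peq a b)"
      using 4(2) hk2 by metis
  qed
next
  case (5 f h)
  from 5(3) obtain k where z: "z = PDisj k"
    and hk1: "\<forall>i a. h i = Some a \<longrightarrow> (\<exists>j b. k j = Some b \<and> peq a b)"
    and hk2: "\<forall>j b. k j = Some b \<longrightarrow> (\<exists>i a. h i = Some a \<and> peq a b)"
    by (cases rule: peq.cases) auto
  show ?case unfolding z
  proof (rule peq.intros(5))
    show "\<forall>i a. f i = Some a \<longrightarrow> (\<exists>j b. k j = Some b \<and> peq a b)"
      using 5(1) hk1 by metis
    show "\<forall>j b. k j = Some b \<longrightarrow> (\<exists>i a. f i = Some a \<and> peq a b)"
      using 5(2) hk2 by metis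
  qed
qed

lemma equivp_peq: "equivp peq"
  by (rule equivpI) (auto simp: reflp_def symp_def transp_def intro: peq_refl peq_sym peq_trans)

quotient_type ('g,'k) fm = "('g,'k) pfm" / peq
  by (rule equivp_peq)

lift_definition Var :: "'g \<Rightarrow> ('g,'k) fm" is PVar .

lift_definition Neg :: "('g,'k) fm \<Rightarrow> ('g,'k) fm" is PNeg
  by (rule peq.intros)

lift_definition Box :: "('g,'k) fm \<Rightarrow> ('g,'k) fm" is PBox
  by (rule peq.intros)

text \<open>Conj S and Disj S: conjunction/disjunction of a set S of formulas (meaningful
  for |S| at most |UNIV :: k set|, in particular for every S of size < kappa).\<close>
definition Conj :: "('g,'k) fm set \<Rightarrow> ('g,'k) fm" where
  "Conj S = abs_fm (PConj (SOME f. abs_fm ` {a. Some a \<in> range f} = S))"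

definition Disj :: "('g,'k) fm set \<Rightarrow> ('g,'k) fm" where
  "Disj S = abs_fm (PDisj (SOME f. abs_fm ` {a. Some a \<in> range f} = S))"

inductive_set Fm_kappa :: "'g set \<Rightarrow> ('g,'k) fm set" for G :: "'g set" where
  "g \<in> G \<Longrightarrow> Var g \<in> Fm_kappa G"
| "\<phi> \<in> Fm_kappa G \<Longrightarrow> Neg \<phi> \<in> Fm_kappa G"
| "\<phi> \<in> Fm_kappa G \<Longrightarrow> Box \<phi> \<in> Fm_kappa G"
| "|S| <o |UNIV :: 'k set| \<Longrightarrow> (\<forall>\<psi>\<in>S. \<psi> \<in> Fm_kappa G) \<Longrightarrow> Conj S \<in> Fm_kappa G"
| "|S| <o |UNIV :: 'k set| \<Longrightarrow> (\<forall>\<psi>\<in>S. \<psi> \<in> Fm_kappa G) \<Longrightarrow> Disj S \<in> Fm_kappa G"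

inductive_set Fm_omega :: "'g set \<Rightarrow> ('g,'k) fm set" for G :: "'g set" where
  "g \<in> G \<Longrightarrow> Var g \<in> Fm_omega G"
| "\<phi> \<in> Fm_omega G \<Longrightarrow> Neg \<phi> \<in> Fm_omega G"
| "\<phi> \<in> Fm_omega G \<Longrightarrow> Box \<phi> \<in> Fm_omega G"
| "finite S \<Longrightarrow> (\<forall>\<psi>\<in>S. \<psi> \<in> Fm_omega G) \<Longrightarrow> Conj S \<in> Fm_omega G"
| "finite S \<Longrightarrow> (\<forall>\<psi>\<in>S. \<psi> \<in> Fm_omega G) \<Longrightarrow> Disj S \<in> Fm_omega G"

definition fm_iff :: "('g,'k) fm \<Rightarrow> ('g,'k) fm \<Rightarrow> ('g,'k) fm" where
  "fm_iff \<phi> \<psi> = Conj {Disj {Neg \<phi>, \<psi>}, Disj {Neg \<psi>, \<phi>}}"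

datatype 'v mfm = MVar 'v | MNeg "'v mfm" | MBox "'v mfm"
  | MConj "'v mfm fset" | MDisj "'v mfm fset"

definition mimp :: "'v mfm \<Rightarrow> 'v mfm \<Rightarrow> 'v mfm" where
  "mimp \<phi> \<psi> = MDisj {|MNeg \<phi>, \<psi>|}"

text \<open>Classical (propositional) evaluation, boxed formulas being treated as atoms;
  tautologies are exactly the substitution instances of classical tautologies.\<close>
primrec peval :: "('v mfm \<Rightarrow> bool) \<Rightarrow> 'v mfm \<Rightarrow> bool" where
  "peval a (MVar p) = a (MVar p)"
| "peval a (MNeg \<phi>) = (\<not> peval a \<phi>)"
| "peval a (MBox \<phi>) = a (MBox \<phi>)"
| "peval a (MConj F) = (\<forall>b\<in>fset (fimage (peval a) F). b)"
| "peval a (MDisj F) = (\<exists>b\<in>fset (fimage (peval a) F). b)"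

definition tautology :: "'v mfm \<Rightarrow> bool" where
  "tautology \<phi> \<longleftrightarrow> (\<forall>a. peval a \<phi>)"

primrec msubst :: "('v \<Rightarrow> 'u mfm) \<Rightarrow> 'v mfm \<Rightarrow> 'u mfm" where
  "msubst \<sigma> (MVar p) = \<sigma> p"
| "msubst \<sigma> (MNeg \<phi>) = MNeg (msubst \<sigma> \<phi>)"
| "msubst \<sigma> (MBox \<phi>) = MBox (msubst \<sigma> \<phi>)"
| "msubst \<sigma> (MConj F) = MConj (fimage (msubst \<sigma>) F)"
| "msubst \<sigma> (MDisj F) = MDisj (fimage (msubst \<sigma>) F)"

definition normal_modal_logic :: "nat mfm set \<Rightarrow> bool" where
  "normal_modal_logic L \<longleftrightarrow>
     (\<forall>\<phi>. tautology \<phi> \<longrightarrow> \<phi> \<in> L) \<and>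
     (\<forall>\<phi> \<psi>. mimp (MBox (mimp \<phi> \<psi>)) (mimp (MBox \<phi>) (MBox \<psi>)) \<in> L) \<and>
     (\<forall>\<phi> \<psi>. \<phi> \<in> L \<longrightarrow> mimp \<phi> \<psi> \<in> L \<longrightarrow> \<psi> \<in> L) \<and>
     (\<forall>\<phi>. \<phi> \<in> L \<longrightarrow> MBox \<phi> \<in> L) \<and>
     (\<forall>\<sigma> \<phi>. \<phi> \<in> L \<longrightarrow> msubst \<sigma> \<phi> \<in> L)"

primrec msat :: "('w \<times> 'w) set \<Rightarrow> ('v \<Rightarrow> 'w set) \<Rightarrow> 'w \<Rightarrow> 'v mfm \<Rightarrow> bool" where
  "msat R V w (MVar p) = (w \<in> V p)"
| "msat R V w (MNeg \<phi>) = (\<not> msat R V w \<phi>)"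
| "msat R V w (MBox \<phi>) = (\<forall>u. (w, u) \<in> R \<longrightarrow> msat R V u \<phi>)"
| "msat R V w (MConj F) = (\<forall>b\<in>fset (fimage (msat R V w) F). b)"
| "msat R V w (MDisj F) = (\<exists>b\<in>fset (fimage (msat R V w) F). b)"

definition frame_valid :: "'w set \<Rightarrow> ('w \<times> 'w) set \<Rightarrow> 'v mfm \<Rightarrow> bool" where
  "frame_valid W R \<phi> \<longleftrightarrow> (\<forall>V w. w \<in> W \<longrightarrow> msat R V w \<phi>)"

text \<open>Finite model property: every non-theorem is refuted on some finite frame
  validating L (finite frames taken, up to isomorphism, with worlds in nat).\<close>
definition finite_model_property :: "nat mfm set \<Rightarrow> bool" where
  "finite_model_property L \<longleftrightarrow>
     (\<forall>\<phi>. \<phi> \<notin> L \<longrightarrow> (\<exists>(W :: nat set) R. finite W \<and> R \<subseteq> W \<times> W \<and>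
         (\<forall>\<psi>\<in>L. frame_valid W R \<psi>) \<and> \<not> frame_valid W R \<phi>))"

primrec inst :: "('v \<Rightarrow> ('g,'k) fm) \<Rightarrow> 'v mfm \<Rightarrow> ('g,'k) fm" where
  "inst \<sigma> (MVar p) = \<sigma> p"
| "inst \<sigma> (MNeg \<phi>) = Neg (inst \<sigma> \<phi>)"
| "inst \<sigma> (MBox \<phi>) = Box (inst \<sigma> \<phi>)"
| "inst \<sigma> (MConj F) = Conj (fset (fimage (inst \<sigma>) F))"
| "inst \<sigma> (MDisj F) = Disj (fset (fimage (inst \<sigma>) F))"

definition L_inst :: "'g set \<Rightarrow> nat mfm set \<Rightarrow> ('g,'k) fm set" where
  "L_inst G L = {inst \<sigma> \<psi> | \<sigma> \<psi>. \<psi> \<in> L \<and> (\<forall>p. \<sigma> p \<in> Fm_kappa G)}"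

text \<open>Derivability of sequents Gamma => Delta (sets of formulas of Fm_kappa G); the
  inductive definition corresponds to well-founded (possibly infinitely branching)
  proof trees. Side conditions keep all formulas inside Fm_kappa G.\<close>
inductive deriv :: "'g set \<Rightarrow> nat mfm set \<Rightarrow> ('g,'k) fm set \<Rightarrow>
    ('g,'k) fm set \<Rightarrow> ('g,'k) fm set \<Rightarrow> bool"
  for G :: "'g set" and L :: "nat mfm set" and T :: "('g,'k) fm set" where
  Ax: "\<phi> \<in> Fm_kappa G \<Longrightarrow> deriv G L T {\<phi>} {\<phi>}"
| W: "deriv G L T \<Gamma> \<Delta> \<Longrightarrow> \<Gamma>' \<union> \<Delta>' \<subseteq> Fm_kappa G \<Longrightarrow>
      deriv G L T (\<Gamma> \<union> \<Gamma>') (\<Delta> \<union> \<Delta>')"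
| Cut: "(\<forall>\<phi>\<in>S. deriv G L T \<Gamma> (\<Delta> \<union> {\<phi>})) \<Longrightarrow> deriv G L T (S \<union> \<Gamma>') \<Delta>' \<Longrightarrow>
      \<Gamma> \<union> \<Delta> \<subseteq> Fm_kappa G \<Longrightarrow> deriv G L T (\<Gamma> \<union> \<Gamma>') (\<Delta> \<union> \<Delta>')"
| LNeg: "deriv G L T \<Gamma> (\<Delta> \<union> S) \<Longrightarrow> deriv G L T (Neg ` S \<union> \<Gamma>) \<Delta>"
| RNeg: "deriv G L T (S \<union> \<Gamma>) \<Delta> \<Longrightarrow> deriv G L T \<Gamma> (\<Delta> \<union> Neg ` S)"
| LConj: "(\<forall>S\<in>\<SS>. |S| <o |UNIV :: 'k set| ) \<Longrightarrow>
      deriv G L T (\<Union>\<SS> \<union> \<Gamma>) \<Delta> \<Longrightarrow>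
      deriv G L T (Conj ` \<SS> \<union> \<Gamma>) \<Delta>"
| RConj: "(\<forall>S\<in>\<SS>. |S| <o |UNIV :: 'k set| \<and> S \<subseteq> Fm_kappa G) \<Longrightarrow>
      (\<forall>c. (\<forall>S\<in>\<SS>. c S \<in> S) \<longrightarrow> deriv G L T \<Gamma> (\<Delta> \<union> c ` \<SS>)) \<Longrightarrow>
      \<Gamma> \<union> \<Delta> \<subseteq> Fm_kappa G \<Longrightarrow>
      deriv G L T \<Gamma> (\<Delta> \<union> Conj ` \<SS>)"
| LDisj: "(\<forall>S\<in>\<SS>. |S| <o |UNIV :: 'k set| \<and> S \<subseteq> Fm_kappa G) \<Longrightarrow>
      (\<forall>c. (\<forall>S\<in>\<SS>. c S \<in> S) \<longrightarrow> deriv G L T (c ` \<SS> \<union> \<Gamma>) \<Delta>) \<Longrightarrow>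
      \<Gamma> \<union> \<Delta> \<subseteq> Fm_kappa G \<Longrightarrow>
      deriv G L T (Disj ` \<SS> \<union> \<Gamma>) \<Delta>"
| RDisj: "(\<forall>S\<in>\<SS>. |S| <o |UNIV :: 'k set| ) \<Longrightarrow>
      deriv G L T \<Gamma> (\<Delta> \<union> \<Union>\<SS>) \<Longrightarrow>
      deriv G L T \<Gamma> (\<Delta> \<union> Disj ` \<SS>)"
| Nec: "deriv G L T S {\<phi>} \<Longrightarrow> deriv G L T (Box ` S) {Box \<phi>}"
| lf: "(\<forall>n. |Sn n| <o |UNIV :: 'k set| \<and> Sn n \<subseteq> Fm_kappa G) \<Longrightarrow>
      (\<forall>I. finite I \<and> I \<subseteq> (\<Union>n. Sn n) \<longrightarrow>
         deriv G L T (range (\<lambda>n. (Box ^^ n) (Disj (I \<inter> Sn n))) \<union> \<Gamma>) \<Delta>) \<Longrightarrow>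
      \<Gamma> \<union> \<Delta> \<subseteq> Fm_kappa G \<Longrightarrow>
      deriv G L T (range (\<lambda>n. (Box ^^ n) (Disj (Sn n))) \<union> \<Gamma>) \<Delta>"
| TL: "deriv G L T (S \<union> \<Gamma>) \<Delta> \<Longrightarrow> S \<subseteq> T \<union> L_inst G L \<Longrightarrow> deriv G L T \<Gamma> \<Delta>"

end

theory Submission imports Defs begin

text \<open>Every formula of \<open>Fm_kappa G\<close> is interderivable with a conjunction of disjunctions
  of finitary formulas, by induction on the formula. Conjunctions of such CNFs flatten, and disjunctions of fewer than \<open>\<kappa>\<close> of them
  distribute: the resulting conjuncts are again disjunctions of subsets of \<open>Fm_omega G\<close>,
  and there are fewer than \<open>\<kappa>\<close> of them because \<open>|Pow (Fm_omega G)| < \<kappa>\<close>.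
  Negations are pushed inside by De Morgan. For the box, \<open>\<box>\<And>\<close> commutes with \<open>\<And>\<box>\<close>, and
  the rule (lf) shows that \<open>\<box>\<Or>S\<close> is interderivable with the disjunction of the finitary
  formulas \<open>\<box>\<Or>J\<close>, \<open>J \<subseteq> S\<close> finite.\<close>

lemma card_of_image_ordLess: "|A| <o r \<Longrightarrow> |f ` A| <o r"
  using card_of_image ordLeq_ordLess_trans by blast

lemma card_of_subset_ordLess: "A \<subseteq> B \<Longrightarrow> |B| <o r \<Longrightarrow> |A| <o r"
  using card_of_mono1 ordLeq_ordLess_trans by blast

lemma Box_funpow_in_Fm_kappa: "\<phi> \<in> Fm_kappa G \<Longrightarrow> (Box ^^ n) \<phi> \<in> Fm_kappa G"
  by (induction n) (auto intro: Fm_kappa.intros)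

definition choice_unions :: "'a set set set \<Rightarrow> 'a set set" where
  "choice_unions \<A> = {\<Union>A\<in>\<A>. c A | c. \<forall>A\<in>\<A>. c A \<in> A}"

lemma choice_unions_subset_Pow: "\<A> \<subseteq> Pow (Pow X) \<Longrightarrow> choice_unions \<A> \<subseteq> Pow X"
  unfolding choice_unions_def by blast

abbreviation cnf :: "('g,'k) fm set set \<Rightarrow> ('g,'k) fm" where
  "cnf \<S> \<equiv> Conj (Disj ` \<S>)"

context
  fixes G :: "'g set" and L :: "nat mfm set" and T :: "('g,'k) fm set"
begin

abbreviation Fm :: "('g,'k) fm set" where "Fm \<equiv> Fm_kappa G"

abbreviation derivable :: "('g,'k) fm set \<Rightarrow> ('g,'k) fm set \<Rightarrow> bool" (infix "\<turnstile>" 50)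
  where "\<Gamma> \<turnstile> \<Delta> \<equiv> deriv G L T \<Gamma> \<Delta>"

abbreviation interderivable :: "('g,'k) fm \<Rightarrow> ('g,'k) fm \<Rightarrow> bool" (infix "\<stileturn>\<turnstile>" 50)
  where "\<phi> \<stileturn>\<turnstile> \<psi> \<equiv> {\<phi>} \<turnstile> {\<psi>} \<and> {\<psi>} \<turnstile> {\<phi>}"

lemma deriv_subset_Fm: "\<Gamma> \<turnstile> \<Delta> \<Longrightarrow> \<Gamma> \<union> \<Delta> \<subseteq> Fm"
proof (induction rule: deriv.induct)
  case (LConj \<SS> \<Gamma> \<Delta>)
  then have "Conj ` \<SS> \<subseteq> Fm" using Fm_kappa.intros(4)[of _ G] by blast
  with LConj show ?case by auto
next
  case (RDisj \<SS> \<Gamma> \<Delta>)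
  then have "Disj ` \<SS> \<subseteq> Fm" using Fm_kappa.intros(5)[of _ G] by blast
  with RDisj show ?case by auto
qed (auto intro: Fm_kappa.intros Box_funpow_in_Fm_kappa)

lemma deriv_mono:
  assumes "\<Gamma> \<turnstile> \<Delta>" "\<Gamma> \<subseteq> \<Gamma>'" "\<Delta> \<subseteq> \<Delta>'" "\<Gamma>' \<union> \<Delta>' \<subseteq> Fm"
  shows "\<Gamma>' \<turnstile> \<Delta>'"
proof -
  have "\<Gamma> \<union> \<Gamma>' \<turnstile> \<Delta> \<union> \<Delta>'" using assms by (intro deriv.W) auto
  with assms show ?thesis by (simp add: Un_absorb1)
qed

lemma deriv_axiom: "\<phi> \<in> \<Gamma> \<Longrightarrow> \<phi> \<in> \<Delta> \<Longrightarrow> \<Gamma> \<union> \<Delta> \<subseteq> Fm \<Longrightarrow> \<Gamma> \<turnstile> \<Delta>"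
  by (rule deriv_mono[OF deriv.Ax[of \<phi>]]) auto

lemma deriv_cut: "\<Gamma> \<turnstile> insert \<phi> \<Delta> \<Longrightarrow> insert \<phi> \<Gamma> \<turnstile> \<Delta> \<Longrightarrow> \<Gamma> \<turnstile> \<Delta>"
  using deriv.Cut[where S="{\<phi>}" and \<Gamma>=\<Gamma> and \<Delta>=\<Delta> and \<Gamma>'=\<Gamma> and \<Delta>'=\<Delta>]
    deriv_subset_Fm by auto

lemma deriv_trans:
  assumes "\<Gamma> \<turnstile> {\<psi>}" "{\<psi>} \<turnstile> {\<chi>}"
  shows "\<Gamma> \<turnstile> {\<chi>}"
proof (rule deriv_cut[where \<phi>=\<psi>])
  have "\<Gamma> \<union> {\<psi>, \<chi>} \<subseteq> Fm" using assms deriv_subset_Fm by blast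
  then show "\<Gamma> \<turnstile> {\<psi>, \<chi>}" "insert \<psi> \<Gamma> \<turnstile> {\<chi>}"
    by (auto intro: deriv_mono[OF assms(1)] deriv_mono[OF assms(2)])
qed

lemma deriv_cut_provable:
  assumes "P \<union> \<Gamma> \<turnstile> \<Delta>" "\<forall>\<phi>\<in>P. {} \<turnstile> {\<phi>}"
  shows "\<Gamma> \<turnstile> \<Delta>"
  using deriv.Cut[where S=P and \<Gamma>="{}" and \<Delta>="{}" and \<Gamma>'=\<Gamma> and \<Delta>'=\<Delta>] assms by simp

lemma interderivable_trans [trans]: "\<phi> \<stileturn>\<turnstile> \<psi> \<Longrightarrow> \<psi> \<stileturn>\<turnstile> \<chi> \<Longrightarrow> \<phi> \<stileturn>\<turnstile> \<chi>"
  using deriv_trans by blast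

lemma deriv_Neg_left: "\<Gamma> \<turnstile> insert \<phi> \<Delta> \<Longrightarrow> insert (Neg \<phi>) \<Gamma> \<turnstile> \<Delta>"
  using deriv.LNeg[where S="{\<phi>}" and \<Gamma>=\<Gamma> and \<Delta>=\<Delta>] by simp

lemma deriv_Neg_right: "insert \<phi> \<Gamma> \<turnstile> \<Delta> \<Longrightarrow> \<Gamma> \<turnstile> insert (Neg \<phi>) \<Delta>"
  using deriv.RNeg[where S="{\<phi>}" and \<Gamma>=\<Gamma> and \<Delta>=\<Delta>] by simp

lemma deriv_Conj_left:
  "|S| <o |UNIV :: 'k set| \<Longrightarrow> S \<union> \<Gamma> \<turnstile> \<Delta> \<Longrightarrow> insert (Conj S) \<Gamma> \<turnstile> \<Delta>"
  using deriv.LConj[where \<SS>="{S}" and \<Gamma>=\<Gamma> and \<Delta>=\<Delta>] by simp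

lemma deriv_Disj_right:
  "|S| <o |UNIV :: 'k set| \<Longrightarrow> \<Gamma> \<turnstile> S \<union> \<Delta> \<Longrightarrow> \<Gamma> \<turnstile> insert (Disj S) \<Delta>"
  using deriv.RDisj[where \<SS>="{S}" and \<Gamma>=\<Gamma> and \<Delta>=\<Delta>] by (simp add: Un_commute)

lemma deriv_Conj_right:
  "|S| <o |UNIV :: 'k set| \<Longrightarrow> S \<subseteq> Fm \<Longrightarrow> \<Gamma> \<union> \<Delta> \<subseteq> Fm \<Longrightarrow>
    (\<And>\<psi>. \<psi> \<in> S \<Longrightarrow> \<Gamma> \<turnstile> insert \<psi> \<Delta>) \<Longrightarrow> \<Gamma> \<turnstile> insert (Conj S) \<Delta>"
  using deriv.RConj[where \<SS>="{S}" and \<Gamma>=\<Gamma> and \<Delta>=\<Delta>] by simp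

lemma deriv_Disj_left:
  "|S| <o |UNIV :: 'k set| \<Longrightarrow> S \<subseteq> Fm \<Longrightarrow> \<Gamma> \<union> \<Delta> \<subseteq> Fm \<Longrightarrow>
    (\<And>\<psi>. \<psi> \<in> S \<Longrightarrow> insert \<psi> \<Gamma> \<turnstile> \<Delta>) \<Longrightarrow> insert (Disj S) \<Gamma> \<turnstile> \<Delta>"
  using deriv.LDisj[where \<SS>="{S}" and \<Gamma>=\<Gamma> and \<Delta>=\<Delta>] by simp

lemma deriv_Conj_member:
  "|S| <o |UNIV :: 'k set| \<Longrightarrow> S \<subseteq> Fm \<Longrightarrow> \<psi> \<in> S \<Longrightarrow> {Conj S} \<turnstile> {\<psi>}"
  using deriv_Conj_left[of S "{}" "{\<psi>}"] deriv_axiom[of \<psi> "S \<union> {}" "{\<psi>}"] by auto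

lemma deriv_Disj_member:
  "|S| <o |UNIV :: 'k set| \<Longrightarrow> S \<subseteq> Fm \<Longrightarrow> \<psi> \<in> S \<Longrightarrow> {\<psi>} \<turnstile> {Disj S}"
  using deriv_Disj_right[of S "{\<psi>}" "{}"] deriv_axiom[of \<psi> "{\<psi>}" "S \<union> {}"] by auto

lemma deriv_ConjI:
  "|S| <o |UNIV :: 'k set| \<Longrightarrow> S \<subseteq> Fm \<Longrightarrow> \<Gamma> \<subseteq> Fm \<Longrightarrow>
    (\<And>\<psi>. \<psi> \<in> S \<Longrightarrow> \<Gamma> \<turnstile> {\<psi>}) \<Longrightarrow> \<Gamma> \<turnstile> {Conj S}"
  using deriv_Conj_right[of S \<Gamma> "{}"] by simp

lemma deriv_DisjE:
  "|S| <o |UNIV :: 'k set| \<Longrightarrow> S \<subseteq> Fm \<Longrightarrow> \<chi> \<in> Fm \<Longrightarrow>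
    (\<And>\<psi>. \<psi> \<in> S \<Longrightarrow> {\<psi>} \<turnstile> {\<chi>}) \<Longrightarrow> {Disj S} \<turnstile> {\<chi>}"
  using deriv_Disj_left[of S "{}" "{\<chi>}"] by simp

lemma deriv_contrapos:
  assumes "{\<phi>} \<turnstile> {\<psi>}"
  shows "{Neg \<psi>} \<turnstile> {Neg \<phi>}"
proof -
  have "insert (Neg \<psi>) {\<phi>} \<turnstile> {}" using assms by (intro deriv_Neg_left) simp
  then have "insert \<phi> {Neg \<psi>} \<turnstile> {}" by (simp add: insert_commute)
  then show ?thesis using deriv_Neg_right by fastforce
qed

lemma Neg_cong: "\<phi> \<stileturn>\<turnstile> \<psi> \<Longrightarrow> Neg \<phi> \<stileturn>\<turnstile> Neg \<psi>"
  using deriv_contrapos by blast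

lemma Box_cong: "\<phi> \<stileturn>\<turnstile> \<psi> \<Longrightarrow> Box \<phi> \<stileturn>\<turnstile> Box \<psi>"
  using deriv.Nec[where S="{\<phi>}" and \<phi>=\<psi>] deriv.Nec[where S="{\<psi>}" and \<phi>=\<phi>] by auto

lemma Conj_cong:
  assumes X: "|X| <o |UNIV :: 'k set|" and g: "\<And>x. x \<in> X \<Longrightarrow> x \<stileturn>\<turnstile> g x"
  shows "Conj X \<stileturn>\<turnstile> Conj (g ` X)"
proof -
  have XF: "X \<subseteq> Fm" and gXF: "g ` X \<subseteq> Fm" using g deriv_subset_Fm by blast+
  have gX: "|g ` X| <o |UNIV :: 'k set|" using X by (rule card_of_image_ordLess)
  have "Conj X \<in> Fm" "Conj (g ` X) \<in> Fm"
    using X gX XF gXF by (auto intro: Fm_kappa.intros(4))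
  moreover have "{Conj X} \<turnstile> {g x}" if "x \<in> X" for x
    using deriv_trans[OF deriv_Conj_member[OF X XF that]] g that by blast
  moreover have "{Conj (g ` X)} \<turnstile> {x}" if "x \<in> X" for x
    using deriv_trans[OF deriv_Conj_member[OF gX gXF imageI[OF that]]] g that by blast
  ultimately show ?thesis
    using X gX XF gXF by (auto intro!: deriv_ConjI)
qed

lemma Disj_cong:
  assumes X: "|X| <o |UNIV :: 'k set|" and g: "\<And>x. x \<in> X \<Longrightarrow> x \<stileturn>\<turnstile> g x"
  shows "Disj X \<stileturn>\<turnstile> Disj (g ` X)"
proof -
  have XF: "X \<subseteq> Fm" and gXF: "g ` X \<subseteq> Fm" using g deriv_subset_Fm by blast+
  have gX: "|g ` X| <o |UNIV :: 'k set|" using X by (rule card_of_image_ordLess)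
  have "Disj X \<in> Fm" "Disj (g ` X) \<in> Fm"
    using X gX XF gXF by (auto intro: Fm_kappa.intros(5))
  moreover have "{x} \<turnstile> {Disj (g ` X)}" if "x \<in> X" for x
    using deriv_trans[OF _ deriv_Disj_member[OF gX gXF imageI[OF that]]] g that by blast
  moreover have "{g x} \<turnstile> {Disj X}" if "x \<in> X" for x
    using deriv_trans[OF _ deriv_Disj_member[OF X XF that]] g that by blast
  ultimately show ?thesis
    using X gX XF gXF by (auto intro!: deriv_DisjE)
qed

lemma Neg_Conj:
  assumes Y: "|Y| <o |UNIV :: 'k set|" "Y \<subseteq> Fm"
  shows "Neg (Conj Y) \<stileturn>\<turnstile> Disj (Neg ` Y)"
proof
  have NY: "|Neg ` Y| <o |UNIV :: 'k set|" "Neg ` Y \<subseteq> Fm"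
    using Y by (auto intro: card_of_image_ordLess Fm_kappa.intros(2))
  have "{} \<turnstile> insert (Conj Y) (Neg ` Y)"
  proof (rule deriv_Conj_right[OF Y])
    fix y assume y: "y \<in> Y"
    have "insert y {} \<turnstile> insert y (Neg ` Y)" using y Y NY by (intro deriv_axiom) auto
    then have "{} \<turnstile> insert (Neg y) (insert y (Neg ` Y))" by (rule deriv_Neg_right)
    then show "{} \<turnstile> insert y (Neg ` Y)" using y by (simp add: insert_absorb)
  qed (use NY in simp)
  then have "insert (Neg (Conj Y)) {} \<turnstile> Neg ` Y \<union> {}" by (intro deriv_Neg_left) simp
  then show "{Neg (Conj Y)} \<turnstile> {Disj (Neg ` Y)}" using deriv_Disj_right[OF NY(1)] by simp
  have "Neg (Conj Y) \<in> Fm" using Y by (auto intro: Fm_kappa.intros)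
  then show "{Disj (Neg ` Y)} \<turnstile> {Neg (Conj Y)}"
    using Y by (auto intro!: deriv_DisjE[OF NY] deriv_contrapos deriv_Conj_member)
qed

lemma Neg_Disj:
  assumes S: "|S| <o |UNIV :: 'k set|" "S \<subseteq> Fm"
  shows "Neg (Disj S) \<stileturn>\<turnstile> Conj (Neg ` S)"
proof
  have NS: "|Neg ` S| <o |UNIV :: 'k set|" "Neg ` S \<subseteq> Fm"
    using S by (auto intro: card_of_image_ordLess Fm_kappa.intros(2))
  have "Neg (Disj S) \<in> Fm" using S by (auto intro: Fm_kappa.intros)
  then show "{Neg (Disj S)} \<turnstile> {Conj (Neg ` S)}"
    using S by (auto intro!: deriv_ConjI[OF NS] deriv_contrapos deriv_Disj_member)
  have "insert (Disj S) {} \<turnstile> S"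
    using S by (intro deriv_Disj_left) (auto intro: deriv_axiom)
  then have "Neg ` S \<union> {Disj S} \<turnstile> {}"
    using deriv.LNeg[where \<Gamma>="{Disj S}" and \<Delta>="{}" and S=S] by simp
  then have "Neg ` S \<turnstile> insert (Neg (Disj S)) {}" by (intro deriv_Neg_right) simp
  then show "{Conj (Neg ` S)} \<turnstile> {Neg (Disj S)}" using deriv_Conj_left[OF NS(1)] by simp
qed

lemma Box_Conj:
  assumes Y: "|Y| <o |UNIV :: 'k set|" "Y \<subseteq> Fm"
  shows "Box (Conj Y) \<stileturn>\<turnstile> Conj (Box ` Y)"
proof
  have BY: "|Box ` Y| <o |UNIV :: 'k set|" "Box ` Y \<subseteq> Fm"
    using Y by (auto intro: card_of_image_ordLess Fm_kappa.intros(3))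
  have "Box (Conj Y) \<in> Fm" using Y by (auto intro: Fm_kappa.intros)
  moreover have "{Box (Conj Y)} \<turnstile> {Box y}" if "y \<in> Y" for y
    using deriv.Nec[OF deriv_Conj_member[OF Y that]] by simp
  ultimately show "{Box (Conj Y)} \<turnstile> {Conj (Box ` Y)}"
    by (auto intro!: deriv_ConjI[OF BY])
  have "Y \<turnstile> {Conj Y}" using Y by (intro deriv_ConjI) (auto intro: deriv_axiom)
  then have "Box ` Y \<union> {} \<turnstile> {Box (Conj Y)}" using deriv.Nec by simp
  then show "{Conj (Box ` Y)} \<turnstile> {Box (Conj Y)}" using deriv_Conj_left[OF BY(1)] by simp
qed

context
  assumes small_Pow_Fm_omega: "|Pow (Fm_omega G :: ('g,'k) fm set)| <o |UNIV :: 'k set|"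
begin

abbreviation Fm_fin :: "('g,'k) fm set" where "Fm_fin \<equiv> Fm_omega G"

lemma small_subset_Pow_Fm_fin: "A \<subseteq> Pow Fm_fin \<Longrightarrow> |A| <o |UNIV :: 'k set|"
  using card_of_subset_ordLess small_Pow_Fm_omega by blast

lemma small_subset_Fm_fin: "A \<subseteq> Fm_fin \<Longrightarrow> |A| <o |UNIV :: 'k set|"
  using ordLeq_ordLess_trans[OF card_of_mono1 ordLess_transitive[OF card_of_Pow small_Pow_Fm_omega]]
  by blast

lemma small_pair: "|{a, b}| <o |UNIV :: 'k set|"
proof -
  have "(Conj {} :: ('g,'k) fm) \<in> Fm_fin" by (rule Fm_omega.intros(4)) auto
  then have "|{{}, {Conj {} :: ('g,'k) fm}}| <o |UNIV :: 'k set|"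
    by (intro small_subset_Pow_Fm_fin) auto
  moreover have "{a, b} = (\<lambda>X. if X = {} then a else b) ` {{}, {Conj {}}}" by auto
  ultimately show ?thesis by (metis card_of_image_ordLess)
qed

lemma small_singleton: "|{a}| <o |UNIV :: 'k set|"
  using small_pair[of a a] by simp

lemma small_empty: "|{}| <o |UNIV :: 'k set|"
  using card_of_subset_ordLess[OF empty_subsetI small_singleton] .

lemma Fm_fin_subset_Fm: "Fm_fin \<subseteq> Fm"
proof
  fix \<phi> assume "\<phi> \<in> Fm_fin"
  then show "\<phi> \<in> Fm"
  proof (induction rule: Fm_omega.induct)
    case (4 S)
    then show ?case using small_subset_Fm_fin[of S] by (auto intro: Fm_kappa.intros)
  next
    case (5 S)
    then show ?case using small_subset_Fm_fin[of S] by (auto intro: Fm_kappa.intros)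
  qed (auto intro: Fm_kappa.intros)
qed

lemma Disj_in_Fm: "S \<subseteq> Fm_fin \<Longrightarrow> Disj S \<in> Fm"
  by (rule Fm_kappa.intros(5)) (use Fm_fin_subset_Fm small_subset_Fm_fin in auto)

lemma small_Disj_image: "\<S> \<subseteq> Pow Fm_fin \<Longrightarrow> |Disj ` \<S>| <o |UNIV :: 'k set|"
  by (rule card_of_image_ordLess[OF small_subset_Pow_Fm_fin])

lemma Disj_image_subset_Fm: "\<S> \<subseteq> Pow Fm_fin \<Longrightarrow> Disj ` \<S> \<subseteq> Fm"
  by (auto intro: Disj_in_Fm)

lemma cnf_in_Fm: "\<S> \<subseteq> Pow Fm_fin \<Longrightarrow> cnf \<S> \<in> Fm"
  using Fm_kappa.intros(4)[OF small_Disj_image] Disj_image_subset_Fm by (metis subset_iff)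

lemma interderivable_Disj_singleton:
  assumes "\<phi> \<in> Fm"
  shows "\<phi> \<stileturn>\<turnstile> Disj {\<phi>}"
proof
  show "{\<phi>} \<turnstile> {Disj {\<phi>}}" by (rule deriv_Disj_member[OF small_singleton]) (use assms in auto)
  show "{Disj {\<phi>}} \<turnstile> {\<phi>}" by (rule deriv_DisjE[OF small_singleton]) (use assms deriv.Ax in auto)
qed

lemma interderivable_Conj_singleton:
  assumes "\<phi> \<in> Fm"
  shows "\<phi> \<stileturn>\<turnstile> Conj {\<phi>}"
proof
  show "{\<phi>} \<turnstile> {Conj {\<phi>}}" by (rule deriv_ConjI[OF small_singleton]) (use assms deriv.Ax in auto)
  show "{Conj {\<phi>}} \<turnstile> {\<phi>}" by (rule deriv_Conj_member[OF small_singleton]) (use assms in auto)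
qed

lemma deriv_fm_iff:
  assumes "\<phi> \<stileturn>\<turnstile> \<psi>"
  shows "{} \<turnstile> {fm_iff \<phi> \<psi>}"
proof -
  have imp: "{} \<turnstile> {Disj {Neg \<alpha>, \<beta>}}" if "{\<alpha>} \<turnstile> {\<beta>}" for \<alpha> \<beta>
  proof -
    have "{} \<turnstile> {Neg \<alpha>, \<beta>} \<union> {}" using deriv_Neg_right[of \<alpha> "{}" "{\<beta>}"] that by simp
    then show ?thesis using deriv_Disj_right[OF small_pair] by simp
  qed
  have "{Disj {Neg \<phi>, \<psi>}, Disj {Neg \<psi>, \<phi>}} \<subseteq> Fm"
    using imp assms deriv_subset_Fm by blast
  then show ?thesis
    unfolding fm_iff_def using imp assms by (auto intro!: deriv_ConjI[OF small_pair])
qed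

definition has_cnf :: "('g,'k) fm \<Rightarrow> bool" where
  "has_cnf \<phi> \<longleftrightarrow> (\<exists>\<S> \<subseteq> Pow Fm_fin. \<phi> \<stileturn>\<turnstile> cnf \<S>)"

lemma has_cnfI: "\<phi> \<stileturn>\<turnstile> cnf \<S> \<Longrightarrow> \<S> \<subseteq> Pow Fm_fin \<Longrightarrow> has_cnf \<phi>"
  unfolding has_cnf_def by blast

lemma has_cnf_cong:
  assumes "\<phi> \<stileturn>\<turnstile> \<psi>" "has_cnf \<psi>"
  shows "has_cnf \<phi>"
proof -
  obtain \<S> where "\<S> \<subseteq> Pow Fm_fin" "\<psi> \<stileturn>\<turnstile> cnf \<S>"
    using assms(2) unfolding has_cnf_def by blast
  then show ?thesis by (intro has_cnfI[OF interderivable_trans[OF assms(1)]])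
qed

lemma has_cnf_Disj_Fm_omega:
  assumes "S \<subseteq> Fm_fin"
  shows "has_cnf (Disj S)"
proof (rule has_cnfI)
  show "Disj S \<stileturn>\<turnstile> cnf {S}"
    using interderivable_Conj_singleton[OF Disj_in_Fm[OF assms]] by simp
qed (use assms in blast)

lemma has_cnf_Fm_omega: "\<phi> \<in> Fm_fin \<Longrightarrow> has_cnf \<phi>"
  using Fm_fin_subset_Fm
  by (intro has_cnf_cong[OF interderivable_Disj_singleton has_cnf_Disj_Fm_omega]) auto

lemma deriv_Disj_mono:
  assumes "S \<subseteq> S'" "S' \<subseteq> Fm_fin"
  shows "{Disj S} \<turnstile> {Disj S'}"
proof (rule deriv_DisjE)
  show "|S| <o |UNIV :: 'k set|" "S \<subseteq> Fm"
    using assms small_subset_Fm_fin Fm_fin_subset_Fm by (meson order_trans)+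
  show "Disj S' \<in> Fm" using assms(2) by (rule Disj_in_Fm)
  show "{\<psi>} \<turnstile> {Disj S'}" if "\<psi> \<in> S" for \<psi>
    using that assms Fm_fin_subset_Fm by (intro deriv_Disj_member small_subset_Fm_fin) auto
qed

lemma deriv_Disj_Union:
  assumes \<U>: "\<U> \<subseteq> Pow Fm_fin"
  shows "{Disj (\<Union>\<U>)} \<turnstile> Disj ` \<U>"
proof -
  have "insert (Disj (\<Union>\<U>)) {} \<turnstile> Disj ` \<U>"
  proof (rule deriv_Disj_left)
    have "\<Union>\<U> \<subseteq> Fm_fin" using \<U> by blast
    then show "|\<Union>\<U>| <o |UNIV :: 'k set|" "\<Union>\<U> \<subseteq> Fm"
      using small_subset_Fm_fin Fm_fin_subset_Fm by auto
    show "{} \<union> Disj ` \<U> \<subseteq> Fm" using Disj_image_subset_Fm[OF \<U>] by simp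
    fix y assume "y \<in> \<Union>\<U>"
    then obtain u where u: "u \<in> \<U>" "y \<in> u" by blast
    then have y_deriv: "{y} \<turnstile> {Disj u}"
      using \<U> Fm_fin_subset_Fm by (intro deriv_Disj_member small_subset_Fm_fin) auto
    then show "insert y {} \<turnstile> Disj ` \<U>"
      by (rule deriv_mono) (use u deriv_subset_Fm[OF y_deriv] Disj_image_subset_Fm[OF \<U>] in auto)
  qed
  then show ?thesis by simp
qed

lemma Conj_cnf_image:
  assumes \<A>: "\<A> \<subseteq> Pow (Pow Fm_fin)" "|\<A>| <o |UNIV :: 'k set|"
  shows "Conj (cnf ` \<A>) \<stileturn>\<turnstile> cnf (\<Union>\<A>)"
proof
  have U: "\<Union>\<A> \<subseteq> Pow Fm_fin" using \<A> by blast
  have C: "|cnf ` \<A>| <o |UNIV :: 'k set|" "cnf ` \<A> \<subseteq> Fm"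
    using \<A> cnf_in_Fm by (auto intro: card_of_image_ordLess)
  have "Conj (cnf ` \<A>) \<in> Fm" using C by (auto intro: Fm_kappa.intros)
  moreover have "{Conj (cnf ` \<A>)} \<turnstile> {Disj s}" if "A \<in> \<A>" "s \<in> A" for A s
  proof (rule deriv_trans)
    show "{Conj (cnf ` \<A>)} \<turnstile> {cnf A}" using C that by (intro deriv_Conj_member) auto
    show "{cnf A} \<turnstile> {Disj s}"
      using that \<A> by (intro deriv_Conj_member small_Disj_image Disj_image_subset_Fm) auto
  qed
  ultimately show "{Conj (cnf ` \<A>)} \<turnstile> {cnf (\<Union>\<A>)}"
    using U by (auto intro!: deriv_ConjI small_Disj_image Disj_image_subset_Fm)
  have cnf_A: "Disj ` \<Union>\<A> \<turnstile> {cnf A}" if "A \<in> \<A>" for A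
  proof (rule deriv_ConjI)
    have "A \<subseteq> Pow Fm_fin" using that \<A> by blast
    then show "|Disj ` A| <o |UNIV :: 'k set|" "Disj ` A \<subseteq> Fm"
      by (simp_all add: small_Disj_image Disj_image_subset_Fm)
    show "Disj ` \<Union>\<A> \<subseteq> Fm" using Disj_image_subset_Fm[OF U] .
    show "Disj ` \<Union>\<A> \<turnstile> {\<psi>}" if "\<psi> \<in> Disj ` A" for \<psi>
      using \<open>A \<in> \<A>\<close> that Disj_image_subset_Fm[OF U] by (intro deriv_axiom) auto
  qed
  have "Disj ` \<Union>\<A> \<union> {} \<turnstile> {Conj (cnf ` \<A>)}"
    using deriv_ConjI[OF C Disj_image_subset_Fm[OF U]] cnf_A by auto
  then show "{cnf (\<Union>\<A>)} \<turnstile> {Conj (cnf ` \<A>)}"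
    using deriv_Conj_left[OF small_Disj_image[OF U]] by simp
qed

lemma has_cnf_Conj:
  assumes X: "|X| <o |UNIV :: 'k set|" and cnfs: "\<forall>x\<in>X. has_cnf x"
  shows "has_cnf (Conj X)"
proof -
  obtain f where f: "\<And>x. x \<in> X \<Longrightarrow> f x \<subseteq> Pow Fm_fin \<and> x \<stileturn>\<turnstile> cnf (f x)"
    using cnfs unfolding has_cnf_def by metis
  have "Conj X \<stileturn>\<turnstile> Conj (cnf ` f ` X)"
    using Conj_cong[OF X, of "cnf \<circ> f"] f by (simp add: image_comp)
  also have "Conj (cnf ` f ` X) \<stileturn>\<turnstile> cnf (\<Union>(f ` X))"
    using f by (intro Conj_cnf_image card_of_image_ordLess[OF X]) auto
  finally show ?thesis by (rule has_cnfI) (use f in auto)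
qed

lemma Disj_cnf_image_deriv_cnf_choice_unions:
  assumes \<A>: "\<A> \<subseteq> Pow (Pow Fm_fin)" "|\<A>| <o |UNIV :: 'k set|"
  shows "{Disj (cnf ` \<A>)} \<turnstile> {cnf (choice_unions \<A>)}"
proof -
  have CU: "choice_unions \<A> \<subseteq> Pow Fm_fin" using \<A>(1) by (rule choice_unions_subset_Pow)
  have C: "|cnf ` \<A>| <o |UNIV :: 'k set|" "cnf ` \<A> \<subseteq> Fm"
    using \<A> cnf_in_Fm by (auto intro: card_of_image_ordLess)
  have "Disj (cnf ` \<A>) \<in> Fm" using Fm_kappa.intros(5)[OF C(1)] C(2) by blast
  moreover have "{Disj (cnf ` \<A>)} \<turnstile> {Disj t}" if t: "t \<in> choice_unions \<A>" for t
  proof -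
    obtain c where c: "\<forall>A\<in>\<A>. c A \<in> A" and t_eq: "t = (\<Union>A\<in>\<A>. c A)"
      using t unfolding choice_unions_def by blast
    have tF: "t \<subseteq> Fm_fin" using t CU by blast
    have "{cnf A} \<turnstile> {Disj t}" if A: "A \<in> \<A>" for A
    proof (rule deriv_trans)
      have "A \<subseteq> Pow Fm_fin" using A \<A> by blast
      then show "{cnf A} \<turnstile> {Disj (c A)}"
        using c A by (intro deriv_Conj_member small_Disj_image Disj_image_subset_Fm) auto
      show "{Disj (c A)} \<turnstile> {Disj t}" using A t_eq tF by (intro deriv_Disj_mono) auto
    qed
    then show ?thesis using C Disj_in_Fm[OF tF] by (intro deriv_DisjE) auto
  qed
  ultimately show ?thesis
    using CU by (intro deriv_ConjI small_Disj_image Disj_image_subset_Fm) auto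
qed

lemma Disj_choice_unions_deriv_cnf_image:
  assumes \<A>: "\<A> \<subseteq> Pow (Pow Fm_fin)"
  shows "Disj ` choice_unions \<A> \<turnstile> cnf ` \<A>"
proof -
  have CU: "Disj ` choice_unions \<A> \<subseteq> Fm"
    using Disj_image_subset_Fm[OF choice_unions_subset_Pow[OF \<A>]] .
  define \<S> where "\<S> = (\<lambda>A. Disj ` A) ` \<A>"
  have \<S>: "\<forall>S\<in>\<S>. |S| <o |UNIV :: 'k set| \<and> S \<subseteq> Fm"
  proof
    fix S assume "S \<in> \<S>"
    then obtain A where A: "A \<in> \<A>" "S = Disj ` A" unfolding \<S>_def by blast
    then have "A \<subseteq> Pow Fm_fin" using \<A> by blast
    then show "|S| <o |UNIV :: 'k set| \<and> S \<subseteq> Fm"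
      using A(2) by (simp add: small_Disj_image Disj_image_subset_Fm)
  qed
  have "Disj ` choice_unions \<A> \<turnstile> {} \<union> Conj ` \<S>"
  proof (rule deriv.RConj[OF \<S>])
    show "Disj ` choice_unions \<A> \<union> {} \<subseteq> Fm" using CU by simp
    show "\<forall>c. (\<forall>S\<in>\<S>. c S \<in> S) \<longrightarrow> Disj ` choice_unions \<A> \<turnstile> {} \<union> c ` \<S>"
    proof (intro allI impI)
      fix c assume "\<forall>S\<in>\<S>. c S \<in> S"
      then have "\<forall>A\<in>\<A>. c (Disj ` A) \<in> Disj ` A" unfolding \<S>_def by simp
      then have "\<forall>A\<in>\<A>. \<exists>a. a \<in> A \<and> Disj a = c (Disj ` A)" by (metis imageE)
      from bchoice[OF this] obtain d
        where d: "\<forall>A\<in>\<A>. d A \<in> A \<and> Disj (d A) = c (Disj ` A)" ..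
      have t: "\<Union>(d ` \<A>) \<in> choice_unions \<A>" unfolding choice_unions_def using d by blast
      have "Disj ` d ` \<A> = c ` \<S>" unfolding \<S>_def using d by (auto simp: image_image)
      moreover have "d ` \<A> \<subseteq> Pow Fm_fin" using d \<A> by blast
      ultimately have d_deriv: "{Disj (\<Union>(d ` \<A>))} \<turnstile> c ` \<S>" using deriv_Disj_Union by metis
      then show "Disj ` choice_unions \<A> \<turnstile> {} \<union> c ` \<S>"
        by (rule deriv_mono) (use t CU deriv_subset_Fm[OF d_deriv] in auto)
    qed
  qed
  moreover have "Conj ` \<S> = cnf ` \<A>" unfolding \<S>_def by (simp add: image_image)
  ultimately show ?thesis by simp
qed

lemma Disj_cnf_image:
  assumes \<A>: "\<A> \<subseteq> Pow (Pow Fm_fin)" "|\<A>| <o |UNIV :: 'k set|"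
  shows "Disj (cnf ` \<A>) \<stileturn>\<turnstile> cnf (choice_unions \<A>)"
proof
  show "{Disj (cnf ` \<A>)} \<turnstile> {cnf (choice_unions \<A>)}"
    using \<A> by (rule Disj_cnf_image_deriv_cnf_choice_unions)
  have "Disj ` choice_unions \<A> \<turnstile> insert (Disj (cnf ` \<A>)) {}"
    using Disj_choice_unions_deriv_cnf_image[OF \<A>(1)]
    by (intro deriv_Disj_right card_of_image_ordLess[OF \<A>(2)]) simp
  then show "{cnf (choice_unions \<A>)} \<turnstile> {Disj (cnf ` \<A>)}"
    using deriv_Conj_left[OF small_Disj_image[OF choice_unions_subset_Pow[OF \<A>(1)]], of "{}"]
    by simp
qed

lemma has_cnf_Disj:
  assumes X: "|X| <o |UNIV :: 'k set|" and cnfs: "\<forall>x\<in>X. has_cnf x"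
  shows "has_cnf (Disj X)"
proof -
  obtain f where f: "\<And>x. x \<in> X \<Longrightarrow> f x \<subseteq> Pow Fm_fin \<and> x \<stileturn>\<turnstile> cnf (f x)"
    using cnfs unfolding has_cnf_def by metis
  have "Disj X \<stileturn>\<turnstile> Disj (cnf ` f ` X)"
    using Disj_cong[OF X, of "cnf \<circ> f"] f by (simp add: image_comp)
  also have "Disj (cnf ` f ` X) \<stileturn>\<turnstile> cnf (choice_unions (f ` X))"
    using f by (intro Disj_cnf_image card_of_image_ordLess[OF X]) auto
  finally show ?thesis
    by (rule has_cnfI) (use f in \<open>auto intro!: choice_unions_subset_Pow\<close>)
qed

lemma deriv_Box_funpow_Disj_Top: "{} \<turnstile> {(Box ^^ n) (Disj {Conj {}})}"
proof (induction n)
  case 0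
  have "{} \<turnstile> {Conj {}}" by (rule deriv_ConjI[OF small_empty]) auto
  moreover have "Conj {} \<in> Fm" using Fm_kappa.intros(4)[OF small_empty] by blast
  then have "{Conj {}} \<turnstile> {Disj {Conj {}}}" by (intro deriv_Disj_member small_singleton) auto
  ultimately show ?case using deriv_trans by simp
next
  case (Suc n)
  then show ?case using deriv.Nec[where S="{}"] by simp
qed

lemma Box_Disj_finite_subsets_subset_Fm_omega:
  "S \<subseteq> Fm_fin \<Longrightarrow> {Box (Disj J) | J. finite J \<and> J \<subseteq> S} \<subseteq> Fm_fin"
  by (fastforce intro: Fm_omega.intros(3,5))

text \<open>The sequence fed to (lf): its members \<open>{\<top>}\<close>, \<open>n \<noteq> 1\<close>, are provable and get cut away,
  while a finite \<open>I\<close> either misses \<open>\<top>\<close>, so that \<open>\<Or>(I \<inter> S\<^sub>0)\<close> is the empty disjunction, or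
  leaves the antecedent \<open>\<box>\<Or>(I \<inter> S)\<close>.\<close>

definition lf_sequence :: "('g,'k) fm set \<Rightarrow> nat \<Rightarrow> ('g,'k) fm set" where
  "lf_sequence S n = (if n = 1 then S else {Conj {}})"

lemma lf_sequence_subset_Fm_omega: "S \<subseteq> Fm_fin \<Longrightarrow> lf_sequence S n \<subseteq> Fm_fin"
  using Fm_omega.intros(4)[of "{}"] unfolding lf_sequence_def by auto

lemma deriv_lf_sequence_finite:
  assumes S: "S \<subseteq> Fm_fin" and \<chi>: "\<chi> \<in> Fm" and I: "finite I"
    and finite_subsets: "\<And>J. finite J \<Longrightarrow> J \<subseteq> S \<Longrightarrow> {Box (Disj J)} \<turnstile> {\<chi>}"
  shows "range (\<lambda>n. (Box ^^ n) (Disj (I \<inter> lf_sequence S n))) \<turnstile> {\<chi>}"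
    (is "?\<Gamma> \<turnstile> _")
proof -
  have \<Gamma>F: "?\<Gamma> \<union> {\<chi>} \<subseteq> Fm"
    using lf_sequence_subset_Fm_omega[OF S] \<chi>
    by (auto intro!: Box_funpow_in_Fm_kappa Disj_in_Fm)
  show ?thesis
  proof (cases "Conj {} \<in> I")
    case True
    have "Box (Disj (I \<inter> S)) \<in> ?\<Gamma>"
      by (rule range_eqI[where x=1]) (simp add: lf_sequence_def)
    moreover have "{Box (Disj (I \<inter> S))} \<turnstile> {\<chi>}" using I by (intro finite_subsets) auto
    ultimately show ?thesis using \<Gamma>F by (elim deriv_mono) auto
  next
    case False
    have "Disj {} \<in> ?\<Gamma>"
      by (rule range_eqI[where x=0]) (use False in \<open>simp add: lf_sequence_def\<close>)
    moreover have "insert (Disj {}) ?\<Gamma> \<turnstile> {\<chi>}"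
      by (rule deriv_Disj_left[OF small_empty]) (use \<Gamma>F in auto)
    ultimately show ?thesis by (simp add: insert_absorb)
  qed
qed

lemma deriv_Box_Disj_of_finite_subsets:
  assumes S: "S \<subseteq> Fm_fin" and \<chi>: "\<chi> \<in> Fm"
    and finite_subsets: "\<And>J. finite J \<Longrightarrow> J \<subseteq> S \<Longrightarrow> {Box (Disj J)} \<turnstile> {\<chi>}"
  shows "{Box (Disj S)} \<turnstile> {\<chi>}"
proof -
  have fin: "lf_sequence S n \<subseteq> Fm_fin" for n using S by (rule lf_sequence_subset_Fm_omega)
  have "range (\<lambda>n. (Box ^^ n) (Disj (lf_sequence S n))) \<union> {} \<turnstile> {\<chi>}"
  proof (rule deriv.lf)
    show "\<forall>n. |lf_sequence S n| <o |UNIV :: 'k set| \<and> lf_sequence S n \<subseteq> Fm"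
      using fin small_subset_Fm_fin Fm_fin_subset_Fm by blast
    show "{} \<union> {\<chi>} \<subseteq> Fm" using \<chi> by simp
    show "\<forall>I. finite I \<and> I \<subseteq> (\<Union>n. lf_sequence S n) \<longrightarrow>
        range (\<lambda>n. (Box ^^ n) (Disj (I \<inter> lf_sequence S n))) \<union> {} \<turnstile> {\<chi>}"
      using deriv_lf_sequence_finite[OF S \<chi> _ finite_subsets] by simp
  qed
  then have "range (\<lambda>n. (Box ^^ n) (Disj {Conj {}})) \<union> {Box (Disj S)} \<turnstile> {\<chi>}"
  proof (rule deriv_mono)
    have "{Conj {}} \<subseteq> Fm_fin" using fin[of 0] by (simp add: lf_sequence_def)
    then show "range (\<lambda>n. (Box ^^ n) (Disj {Conj {}})) \<union> {Box (Disj S)} \<union> {\<chi>} \<subseteq> Fm"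
      using \<chi> Disj_in_Fm[OF S]
      by (auto intro: Box_funpow_in_Fm_kappa Disj_in_Fm Fm_kappa.intros(3))
  qed (auto simp: lf_sequence_def)
  then show ?thesis by (rule deriv_cut_provable) (use deriv_Box_funpow_Disj_Top in auto)
qed

lemma Box_Disj_interderivable_Disj_finite_subsets:
  assumes S: "S \<subseteq> Fm_fin"
  shows "Box (Disj S) \<stileturn>\<turnstile> Disj {Box (Disj J) | J. finite J \<and> J \<subseteq> S}"
proof
  define B where "B = {Box (Disj J) | J. finite J \<and> J \<subseteq> S}"
  have B: "B \<subseteq> Fm_fin" unfolding B_def using S by (rule Box_Disj_finite_subsets_subset_Fm_omega)
  have BF: "|B| <o |UNIV :: 'k set|" "B \<subseteq> Fm" "Disj B \<in> Fm"
    using B small_subset_Fm_fin Fm_fin_subset_Fm Disj_in_Fm by auto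
  have "{b} \<turnstile> {Box (Disj S)}" if "b \<in> B" for b
  proof -
    obtain J where J: "b = Box (Disj J)" "J \<subseteq> S" using \<open>b \<in> B\<close> unfolding B_def by blast
    show ?thesis using deriv.Nec[OF deriv_Disj_mono[OF J(2) S]] J(1) by simp
  qed
  moreover have "Box (Disj S) \<in> Fm" using Disj_in_Fm[OF S] by (rule Fm_kappa.intros(3))
  ultimately show "{Disj B} \<turnstile> {Box (Disj S)}" using BF by (intro deriv_DisjE) auto
  have "{Box (Disj J)} \<turnstile> {Disj B}" if "finite J" "J \<subseteq> S" for J
  proof (rule deriv_Disj_member[OF BF(1,2)])
    show "Box (Disj J) \<in> B" unfolding B_def using that by blast
  qed
  then show "{Box (Disj S)} \<turnstile> {Disj B}"
    using deriv_Box_Disj_of_finite_subsets[OF S BF(3)] by blast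
qed

lemma has_cnf_Neg:
  assumes "has_cnf \<phi>"
  shows "has_cnf (Neg \<phi>)"
proof -
  obtain \<S> where \<S>: "\<S> \<subseteq> Pow Fm_fin" "\<phi> \<stileturn>\<turnstile> cnf \<S>"
    using assms unfolding has_cnf_def by blast
  have "Neg \<phi> \<stileturn>\<turnstile> Neg (cnf \<S>)" using \<S>(2) by (rule Neg_cong)
  also have "Neg (cnf \<S>) \<stileturn>\<turnstile> Disj (Neg ` Disj ` \<S>)"
    using \<S>(1) by (intro Neg_Conj small_Disj_image Disj_image_subset_Fm)
  finally show ?thesis
  proof (rule has_cnf_cong)
    have "has_cnf (Neg (Disj s))" if "s \<in> \<S>" for s
    proof (rule has_cnf_cong)
      have s: "s \<subseteq> Fm_fin" using that \<S>(1) by blast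
      then show "Neg (Disj s) \<stileturn>\<turnstile> Conj (Neg ` s)"
        using Fm_fin_subset_Fm by (intro Neg_Disj small_subset_Fm_fin) auto
      have "Neg ` s \<subseteq> Fm_fin" using s by (auto intro: Fm_omega.intros(2))
      then show "has_cnf (Conj (Neg ` s))"
        by (intro has_cnf_Conj small_subset_Fm_fin) (auto intro: has_cnf_Fm_omega)
    qed
    then show "has_cnf (Disj (Neg ` Disj ` \<S>))"
      using \<S>(1) by (intro has_cnf_Disj card_of_image_ordLess small_Disj_image) auto
  qed
qed

lemma has_cnf_Box:
  assumes "has_cnf \<phi>"
  shows "has_cnf (Box \<phi>)"
proof -
  obtain \<S> where \<S>: "\<S> \<subseteq> Pow Fm_fin" "\<phi> \<stileturn>\<turnstile> cnf \<S>"
    using assms unfolding has_cnf_def by blast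
  have "Box \<phi> \<stileturn>\<turnstile> Box (cnf \<S>)" using \<S>(2) by (rule Box_cong)
  also have "Box (cnf \<S>) \<stileturn>\<turnstile> Conj (Box ` Disj ` \<S>)"
    using \<S>(1) by (intro Box_Conj small_Disj_image Disj_image_subset_Fm)
  finally show ?thesis
  proof (rule has_cnf_cong)
    have "has_cnf (Box (Disj s))" if "s \<in> \<S>" for s
    proof (rule has_cnf_cong)
      have s: "s \<subseteq> Fm_fin" using that \<S>(1) by blast
      then show "Box (Disj s) \<stileturn>\<turnstile> Disj {Box (Disj J) | J. finite J \<and> J \<subseteq> s}"
        by (rule Box_Disj_interderivable_Disj_finite_subsets)
      show "has_cnf (Disj {Box (Disj J) | J. finite J \<and> J \<subseteq> s})"
        using s by (intro has_cnf_Disj_Fm_omega Box_Disj_finite_subsets_subset_Fm_omega)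
    qed
    then show "has_cnf (Conj (Box ` Disj ` \<S>))"
      using \<S>(1) by (intro has_cnf_Conj card_of_image_ordLess small_Disj_image) auto
  qed
qed

lemma has_cnf_Fm_kappa: "\<phi> \<in> Fm \<Longrightarrow> has_cnf \<phi>"
proof (induction rule: Fm_kappa.induct)
  case (1 g)
  then show ?case by (intro has_cnf_Fm_omega Fm_omega.intros(1))
next
  case (2 \<phi>)
  from "2.IH" show ?case by (rule has_cnf_Neg)
next
  case (3 \<phi>)
  from "3.IH" show ?case by (rule has_cnf_Box)
next
  case (4 S)
  then show ?case by (intro has_cnf_Conj) auto
next
  case (5 S)
  then show ?case by (intro has_cnf_Disj) auto
qed

end

end

theorem theorem4p6:
  fixes G :: "'g set" and L :: "nat mfm set" and T :: "('g,'k) fm set"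
    and \<phi> :: "('g,'k) fm"
  assumes "normal_modal_logic L"
    and "finite_model_property L"
    and "T \<subseteq> Fm_kappa G"
    and "regularCard |UNIV :: 'k set|"
    and "|Pow (Fm_omega G :: ('g,'k) fm set)| <o |UNIV :: 'k set|"
    and "\<phi> \<in> Fm_kappa G"
  shows "\<exists>\<SS> \<subseteq> Pow (Fm_omega G).
           deriv G L T {} {fm_iff \<phi> (Conj (Disj ` \<SS>))}"
proof -
  obtain \<S> where "\<S> \<subseteq> Pow (Fm_omega G)"
    and "deriv G L T {\<phi>} {cnf \<S>} \<and> deriv G L T {cnf \<S>} {\<phi>}"
    using has_cnf_Fm_kappa[OF assms(5,6), of L T] unfolding has_cnf_def[OF assms(5)] by blast
  with deriv_fm_iff[OF assms(5)] show ?thesis by blast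
qed

end
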